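(* Let $k$ be a field of characteristic $p>0$, $m\ge1$, and let $G=\ker(F:W_m\to W_m)$, the finite group scheme with Hopf algebra $R=k[x_0,\dots,x_{m-1}]/(x_0^p,\dots,x_{m-1}^p)$ (comultiplication given by Witt vector addition). Let $M$ be a finite-dimensional $R$-comodule with comodule map $c_M$ and $v\in M\setminus\{0\}$. Write $c_M(v)=\sum_{\underline i\in\{0,\dots,p-1\}^m}v_{\underline i}\otimes\underline x^{\underline i}$, where $\underline x^{\underline i}=\prod_{\nu=0}^{m-1}x_\nu^{i_\nu}$. Order $\{0,\dots,p-1\}^m$ by $\underline i\succeq\underline i'$ iff $\sum_\nu i_\nu p^\nu\ge\sum_\nu i'_\nu p^\nu$. If $\underline j$ is maximal among the $\underline i$ with $v_{\underline i}\ne0$, then $v_{\underline j}\in M^G$.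
   Context: $W_m$ is the group scheme of truncated Witt vectors of length $m$ over $k$, $F$ the relative Frobenius $(a_0,\dots,a_{m-1})\mapsto(a_0^p,\dots,a_{m-1}^p)$. An $R$-comodule is a $k$-vector space $M$ with a $k$-linear map $c_M:M\to M\otimes_kR$ satisfying coassociativity $(\mathrm{id}\otimes c)\circ c_M=(c_M\otimes\mathrm{id})\circ c_M$ and the counit axiom $(\mathrm{id}\otimes u)\circ c_M=\mathrm{id}$; equivalently a representation of $G$ on $M$. $M^G=\{w\in M:c_M(w)=w\otimes1\}$. *)

theory Defs
  imports Complex_Main "HOL-Library.Poly_Mapping"
begin

section \<open>Polynomials in the variables X_0, X_1, ... (Inl) and Y_0, Y_1, ... (Inr)\<close>

type_synonym 'a wpoly = "((nat + nat) \<Rightarrow>\<^sub>0 nat) \<Rightarrow>\<^sub>0 'a"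

definition wvar :: "nat + nat \<Rightarrow> 'a::comm_ring_1 wpoly" where
  "wvar v = Poly_Mapping.single (Poly_Mapping.single v 1) 1"

definition wconst :: "'a::comm_ring_1 \<Rightarrow> 'a wpoly" where
  "wconst c = Poly_Mapping.single 0 c"

definition ghost_XY :: "nat \<Rightarrow> nat \<Rightarrow> rat wpoly" where
  "ghost_XY p n = (\<Sum>i\<le>n. wconst (of_nat p ^ i) *
      (wvar (Inl i) ^ (p ^ (n - i)) + wvar (Inr i) ^ (p ^ (n - i))))"

text \<open>List [S_0, ..., S_{n-1}] of the Witt vector addition polynomials (over Q),
  determined by  sum_{i<=n} p^i S_i^(p^(n-i)) = w_n(X) + w_n(Y).\<close>
primrec witt_add_list :: "nat \<Rightarrow> nat \<Rightarrow> rat wpoly list" where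
  "witt_add_list p 0 = []"
| "witt_add_list p (Suc n) =
     (let L = witt_add_list p n in
      L @ [wconst (1 / of_nat p ^ n) *
           (ghost_XY p n - (\<Sum>i<n. wconst (of_nat p ^ i) * (L ! i) ^ (p ^ (n - i))))])"

definition witt_add :: "nat \<Rightarrow> nat \<Rightarrow> rat wpoly" where
  "witt_add p n = witt_add_list p (Suc n) ! n"

text \<open>The Witt addition polynomials have integer coefficients; their image in k[X,Y].\<close>
definition witt_add_k :: "nat \<Rightarrow> nat \<Rightarrow> 'k::field wpoly" where
  "witt_add_k p n = Poly_Mapping.map (\<lambda>q. of_int \<lfloor>q\<rfloor>) (witt_add p n)"

definition witt_idx :: "nat \<Rightarrow> nat \<Rightarrow> (nat \<Rightarrow> nat) set" where
  "witt_idx p m = {i. (\<forall>\<nu><m. i \<nu> < p) \<and> (\<forall>\<nu>\<ge>m. i \<nu> = 0)}"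

text \<open>Exponent of the monomial x^a (tensor) x^b in R (tensor) R, i.e. X^a Y^b.\<close>
definition tensor_exp :: "nat \<Rightarrow> (nat \<Rightarrow> nat) \<Rightarrow> (nat \<Rightarrow> nat) \<Rightarrow> (nat + nat) \<Rightarrow>\<^sub>0 nat" where
  "tensor_exp m a b = (\<Sum>\<nu><m. Poly_Mapping.single (Inl \<nu>) (a \<nu>) + Poly_Mapping.single (Inr \<nu>) (b \<nu>))"

text \<open>Structure constants of the comultiplication:
  Delta(x^i) = prod_nu S_nu(x (tensor) 1, 1 (tensor) x)^(i_nu) = sum_{a,b} comult_coeff i a b x^a (tensor) x^b
  in R (tensor) R = k[X,Y]/(X_nu^p, Y_nu^p).  Since the ideal is monomial, for a, b in the box
  the coefficient can be read off in k[X,Y].\<close>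
definition comult_coeff :: "nat \<Rightarrow> nat \<Rightarrow> (nat \<Rightarrow> nat) \<Rightarrow> (nat \<Rightarrow> nat) \<Rightarrow> (nat \<Rightarrow> nat) \<Rightarrow> 'k::field" where
  "comult_coeff p m i a b =
     Poly_Mapping.lookup (\<Prod>\<nu><m. (witt_add_k p \<nu> :: 'k wpoly) ^ (i \<nu>)) (tensor_exp m a b)"

text \<open>Since R has the basis of monomials x^i (i in witt_idx p m), an element of M (tensor) R is written
  uniquely as sum_i w_i (tensor) x^i; we represent it by the family i |-> w_i (zero outside the index set).
  So c_M(w) = sum_i cM w i (tensor) x^i.
  Counit u(x^i) = [i = 0] (unit of W_m is the zero vector).
  Coassociativity (id (tensor) Delta) o c_M = (c_M (tensor) id) o c_M, compared on the basis
  x^a (tensor) x^b of R (tensor) R.\<close>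
definition witt_kerF_comodule ::
  "nat \<Rightarrow> nat \<Rightarrow> ('k::field \<Rightarrow> 'm::ab_group_add \<Rightarrow> 'm) \<Rightarrow> ('m \<Rightarrow> (nat \<Rightarrow> nat) \<Rightarrow> 'm) \<Rightarrow> bool" where
  "witt_kerF_comodule p m scale cM \<longleftrightarrow>
     (\<forall>i. Vector_Spaces.linear scale scale (\<lambda>w. cM w i)) \<and>
     (\<forall>w i. i \<notin> witt_idx p m \<longrightarrow> cM w i = 0) \<and>
     (\<forall>w. cM w (\<lambda>_. 0) = w) \<and>
     (\<forall>w. \<forall>a\<in>witt_idx p m. \<forall>b\<in>witt_idx p m.
        cM (cM w b) a = (\<Sum>i\<in>witt_idx p m. scale (comult_coeff p m i a b) (cM w i)))"

definition comod_invariants :: "('m::zero \<Rightarrow> (nat \<Rightarrow> nat) \<Rightarrow> 'm) \<Rightarrow> 'm set" where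
  "comod_invariants cM = {w. cM w = (\<lambda>i. if i = (\<lambda>_. 0) then w else 0)}"

definition idx_val :: "nat \<Rightarrow> nat \<Rightarrow> (nat \<Rightarrow> nat) \<Rightarrow> nat" where
  "idx_val p m i = (\<Sum>\<nu><m. i \<nu> * p ^ \<nu>)"

end

theory Submission
  imports Defs
begin

text \<open>Give the variables X_nu and Y_nu the weight p^nu. The ghost components w_n(X) + w_n(Y)
  are homogeneous of weight p^n, so by the recursion defining them the Witt addition polynomials
  S_n are too. Hence Delta(x^i) = prod_nu S_nu^(i_nu) only involves monomials x^a (tensor) x^b
  with val a + val b = val i. Applying coassociativity to v and comparing coefficients of
  x^a (tensor) x^j with a \<noteq> 0, only indices i with val i = val a + val j > val j could
  contribute, and by maximality of j these have v_i = 0; so c_M(v_j) = v_j (tensor) 1.\<close>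

definition var_weight :: "nat \<Rightarrow> nat + nat \<Rightarrow> nat" where
  "var_weight p v = (case v of Inl n \<Rightarrow> p ^ n | Inr n \<Rightarrow> p ^ n)"

definition monom_weight :: "nat \<Rightarrow> ((nat + nat) \<Rightarrow>\<^sub>0 nat) \<Rightarrow> nat" where
  "monom_weight p e = (\<Sum>v\<in>Poly_Mapping.keys e. Poly_Mapping.lookup e v * var_weight p v)"

lemma monom_weight_zero [simp]: "monom_weight p 0 = 0"
  by (simp add: monom_weight_def)

lemma monom_weight_add [simp]: "monom_weight p (e1 + e2) = monom_weight p e1 + monom_weight p e2"
  unfolding monom_weight_def
  by (rule setsum_keys_plus_distrib) (auto simp: algebra_simps)

lemma monom_weight_single [simp]: "monom_weight p (Poly_Mapping.single v k) = k * var_weight p v"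
  by (simp add: monom_weight_def)

lemma monom_weight_sum: "monom_weight p (\<Sum>x\<in>A. f x) = (\<Sum>x\<in>A. monom_weight p (f x))"
  by (induction A rule: infinite_finite_induct) auto

lemma monom_weight_tensor_exp:
  "monom_weight p (tensor_exp m a b) = idx_val p m a + idx_val p m b"
  by (simp add: tensor_exp_def monom_weight_sum idx_val_def var_weight_def sum.distrib)

definition weighted_homogeneous :: "nat \<Rightarrow> nat \<Rightarrow> 'a::comm_ring_1 wpoly \<Rightarrow> bool" where
  "weighted_homogeneous p w f \<longleftrightarrow> (\<forall>e\<in>Poly_Mapping.keys f. monom_weight p e = w)"

lemma weighted_homogeneous_zero [simp]: "weighted_homogeneous p w 0"
  by (simp add: weighted_homogeneous_def)

lemma weighted_homogeneous_add:
  "weighted_homogeneous p w f \<Longrightarrow> weighted_homogeneous p w g \<Longrightarrow> weighted_homogeneous p w (f + g)"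
  unfolding weighted_homogeneous_def using keys_add[of f g] by blast

lemma weighted_homogeneous_diff:
  "weighted_homogeneous p w f \<Longrightarrow> weighted_homogeneous p w g \<Longrightarrow> weighted_homogeneous p w (f - g)"
  unfolding weighted_homogeneous_def using keys_diff[of f g] by blast

lemma weighted_homogeneous_mult:
  "weighted_homogeneous p w1 f \<Longrightarrow> weighted_homogeneous p w2 g \<Longrightarrow>
    weighted_homogeneous p (w1 + w2) (f * g)"
  unfolding weighted_homogeneous_def using keys_mult[of f g] by fastforce

lemma weighted_homogeneous_one: "weighted_homogeneous p 0 (1 :: 'a::comm_ring_1 wpoly)"
  by (simp add: weighted_homogeneous_def)

lemma weighted_homogeneous_power:
  "weighted_homogeneous p w f \<Longrightarrow> weighted_homogeneous p (w * n) (f ^ n)"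
  by (induction n) (auto simp: weighted_homogeneous_one
      dest: weighted_homogeneous_mult[of p w f "w * _"])

lemma weighted_homogeneous_sum:
  "(\<And>x. x \<in> A \<Longrightarrow> weighted_homogeneous p w (f x)) \<Longrightarrow> weighted_homogeneous p w (\<Sum>x\<in>A. f x)"
  by (induction A rule: infinite_finite_induct) (auto intro: weighted_homogeneous_add)

lemma weighted_homogeneous_prod:
  "(\<And>x. x \<in> A \<Longrightarrow> weighted_homogeneous p (g x) (f x)) \<Longrightarrow>
    weighted_homogeneous p (\<Sum>x\<in>A. g x) (\<Prod>x\<in>A. f x)"
  by (induction A rule: infinite_finite_induct)
    (auto intro: weighted_homogeneous_mult simp: weighted_homogeneous_one)

lemma weighted_homogeneous_wconst: "weighted_homogeneous p 0 (wconst c)"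
  by (simp add: weighted_homogeneous_def wconst_def)

lemma weighted_homogeneous_wvar: "weighted_homogeneous p (var_weight p v) (wvar v)"
  by (simp add: weighted_homogeneous_def wvar_def)

lemma weighted_homogeneous_scaled_power:
  assumes "weighted_homogeneous p (p ^ i) f" and "i \<le> n"
  shows "weighted_homogeneous p (p ^ n) (wconst c * f ^ (p ^ (n - i)))"
proof -
  have "weighted_homogeneous p (0 + p ^ i * p ^ (n - i)) (wconst c * f ^ (p ^ (n - i)))"
    by (intro weighted_homogeneous_mult weighted_homogeneous_wconst weighted_homogeneous_power assms)
  then show ?thesis
    using \<open>i \<le> n\<close> by (simp add: power_add[symmetric])
qed

lemma weighted_homogeneous_ghost_XY: "weighted_homogeneous p (p ^ n) (ghost_XY p n)"
  unfolding ghost_XY_def distrib_left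
  using weighted_homogeneous_wvar[where v = "Inl i" for i] weighted_homogeneous_wvar[where v = "Inr i" for i]
  by (intro weighted_homogeneous_sum weighted_homogeneous_add weighted_homogeneous_scaled_power)
    (auto simp: var_weight_def)

lemma witt_add_list_weighted_homogeneous:
  "length (witt_add_list p n) = n \<and> (\<forall>i<n. weighted_homogeneous p (p ^ i) (witt_add_list p n ! i))"
proof (induction n)
  case 0
  show ?case by simp
next
  case (Suc n)
  define L where "L = witt_add_list p n"
  have len: "length L = n" and hom: "\<forall>i<n. weighted_homogeneous p (p ^ i) (L ! i)"
    using Suc L_def by auto
  have "weighted_homogeneous p (0 + p ^ n) (wconst (1 / of_nat p ^ n) *
      (ghost_XY p n - (\<Sum>i<n. wconst (of_nat p ^ i) * (L ! i) ^ (p ^ (n - i)))))"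
    using hom by (intro weighted_homogeneous_mult weighted_homogeneous_wconst
        weighted_homogeneous_diff weighted_homogeneous_ghost_XY weighted_homogeneous_sum
        weighted_homogeneous_scaled_power) auto
  then show ?case
    using len hom by (auto simp: L_def[symmetric] Let_def nth_append less_Suc_eq)
qed

lemma weighted_homogeneous_witt_add_k:
  "weighted_homogeneous p (p ^ n) (witt_add_k p n :: 'k::field wpoly)"
proof -
  have "weighted_homogeneous p (p ^ n) (witt_add p n)"
    unfolding witt_add_def using witt_add_list_weighted_homogeneous[of p "Suc n"] by blast
  moreover have "Poly_Mapping.keys (Poly_Mapping.map f q) \<subseteq> Poly_Mapping.keys q"
    for f :: "rat \<Rightarrow> 'k" and q :: "rat wpoly"
    by (auto simp: in_keys_iff Poly_Mapping.map.rep_eq when_def)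
  ultimately show ?thesis
    unfolding weighted_homogeneous_def witt_add_k_def by blast
qed

lemma comult_coeff_nonzero_imp_idx_val:
  assumes "comult_coeff p m i a b \<noteq> (0::'k::field)"
  shows "idx_val p m i = idx_val p m a + idx_val p m b"
proof -
  have "weighted_homogeneous p (\<Sum>\<nu><m. p ^ \<nu> * i \<nu>) (\<Prod>\<nu><m. (witt_add_k p \<nu> :: 'k wpoly) ^ i \<nu>)"
    by (intro weighted_homogeneous_prod weighted_homogeneous_power weighted_homogeneous_witt_add_k)
  then have "weighted_homogeneous p (idx_val p m i) (\<Prod>\<nu><m. (witt_add_k p \<nu> :: 'k wpoly) ^ i \<nu>)"
    by (simp add: idx_val_def mult.commute)
  moreover have "tensor_exp m a b \<in> Poly_Mapping.keys (\<Prod>\<nu><m. (witt_add_k p \<nu> :: 'k wpoly) ^ i \<nu>)"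
    using assms by (simp add: comult_coeff_def in_keys_iff)
  ultimately show ?thesis
    unfolding weighted_homogeneous_def monom_weight_tensor_exp[symmetric] by metis
qed

lemma idx_val_eq_0_iff:
  assumes "p > 0" and "a \<in> witt_idx p m"
  shows "idx_val p m a = 0 \<longleftrightarrow> a = (\<lambda>_. 0)"
proof
  assume "idx_val p m a = 0"
  then have "\<forall>\<nu><m. a \<nu> = 0"
    using \<open>p > 0\<close> by (simp add: idx_val_def)
  moreover have "\<forall>\<nu>\<ge>m. a \<nu> = 0"
    using \<open>a \<in> witt_idx p m\<close> by (simp add: witt_idx_def)
  ultimately show "a = (\<lambda>_. 0)"
    by (metis not_less)
qed (simp add: idx_val_def)

lemma witt_kerF_comodule_max_coefficient_invariant:
  assumes comod: "witt_kerF_comodule p m scale cM" and "p > 0" and j: "j \<in> witt_idx p m"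
    and max: "\<forall>i\<in>witt_idx p m. cM v i \<noteq> 0 \<longrightarrow> idx_val p m i \<le> idx_val p m j"
  shows "cM v j \<in> comod_invariants cM"
proof -
  have lin: "Vector_Spaces.linear scale scale (\<lambda>w. cM w i)"
    and zero_out: "\<And>w i. i \<notin> witt_idx p m \<Longrightarrow> cM w i = 0"
    and counit: "\<And>w. cM w (\<lambda>_. 0) = w"
    and coassoc: "\<And>w a b. a \<in> witt_idx p m \<Longrightarrow> b \<in> witt_idx p m \<Longrightarrow>
        cM (cM w b) a = (\<Sum>i\<in>witt_idx p m. scale (comult_coeff p m i a b) (cM w i))" for i
    using comod unfolding witt_kerF_comodule_def by simp_all
  interpret vector_space scale
    using lin unfolding Vector_Spaces.linear_def by blast
  have "cM (cM v j) a = 0" if a: "a \<in> witt_idx p m" "a \<noteq> (\<lambda>_. 0)" for a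
  proof -
    have "idx_val p m a > 0"
      using idx_val_eq_0_iff[OF \<open>p > 0\<close>] a by blast
    then have "comult_coeff p m i a j = 0" if "cM v i \<noteq> 0" "i \<in> witt_idx p m" for i
      using max that comult_coeff_nonzero_imp_idx_val[of p m i a j] by fastforce
    then have "(\<Sum>i\<in>witt_idx p m. scale (comult_coeff p m i a j) (cM v i)) = 0"
      by (intro sum.neutral) fastforce
    then show ?thesis
      using coassoc[OF a(1) j] by simp
  qed
  then have "cM (cM v j) = (\<lambda>a. if a = (\<lambda>_. 0) then cM v j else 0)"
    using zero_out counit by fastforce
  then show ?thesis
    unfolding comod_invariants_def by simp
qed

theorem corollary3p10:
  fixes scale :: "'k::field \<Rightarrow> 'm::ab_group_add \<Rightarrow> 'm"
    and Basis :: "'m set"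
    and cM :: "'m \<Rightarrow> (nat \<Rightarrow> nat) \<Rightarrow> 'm"
    and p m :: nat and v :: 'm and j :: "nat \<Rightarrow> nat"
  assumes "CHAR('k) = p" and "p > 0"
    and "m \<ge> 1"
    and "finite_dimensional_vector_space scale Basis"
    and "witt_kerF_comodule p m scale cM"
    and "v \<noteq> 0"
    and "j \<in> witt_idx p m" and "cM v j \<noteq> 0"
    and "\<forall>i\<in>witt_idx p m. cM v i \<noteq> 0 \<longrightarrow> \<not> (idx_val p m j < idx_val p m i)"
  shows "cM v j \<in> comod_invariants cM"
  using assms(2,5,7,9)
  by (intro witt_kerF_comodule_max_coefficient_invariant) (auto simp: not_less)

end
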